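(* Let $0<\nu\le1$ and define, for $\xi\in\mathbb{R}^n$, $$\tilde f(\xi)=\sum_{j\ge0}(j!)^{-1/\nu}|\xi|^j,\qquad F(\xi)=\sum_{j\ge0}(j+1)^{-1}(j!)^{-1/\nu}|\xi|^{j+1},$$ regarded also as functions of $|\xi|\in\mathbb{R}^+$ (so $\tilde f=dF/d|\xi|$). Then: (A.3) $\sum_{j\ge1}j(j!)^{-1/\nu}|\xi|^j\le|\xi|^\nu\sum_{j\ge0}(j!)^{-1/\nu}|\xi|^j\le\sum_{j\ge0}(j+1)(j!)^{-1/\nu}|\xi|^j$; (A.4) $\sum_{j\ge0}(j+1)^{-1}(j!)^{-1/\nu}|\xi|^{j+1}\le|\xi|^{1-\nu}\sum_{j\ge0}(j!)^{-1/\nu}|\xi|^j$; (A.5) for $\xi\ne0$, $\tilde f^{-1}(d\tilde f/d|\xi|)\le|\xi|^{\nu-1}\le F^{-1}\tilde f=F^{-1}(dF/d|\xi|)$; (A.6) $|\xi|^\nu\tilde f\le d(|\xi|\tilde f)/d|\xi|$; (A.7) for all $a>0$, $F(a)(|\xi|\vee a)^{\nu-1}\exp(\nu^{-1}(|\xi|^\nu-a^\nu))\le\tilde f(\xi)\le\exp(\nu^{-1}|\xi|^\nu)$; (A.8) $\tilde f(\xi)=(2\pi)^{(\nu-1)/(2\nu)}\nu^{1/2}|\xi|^{(\nu-1)/2}\exp(\nu^{-1}|\xi|^\nu)(1+o(1))$ as $|\xi|\to\infty$.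
   Context: $a\vee b=\max(a,b)$. *)

theory Defs
  imports "HOL-Analysis.Analysis" "HOL-Library.Landau_Symbols"
begin

definition ftilde :: "real \<Rightarrow> real \<Rightarrow> real" where
  "ftilde \<nu> r = (\<Sum>j. fact j powr (-1/\<nu>) * r ^ j)"

definition Fbig :: "real \<Rightarrow> real \<Rightarrow> real" where
  "Fbig \<nu> r = (\<Sum>j. inverse (real (j+1)) * fact j powr (-1/\<nu>) * r ^ (j+1))"

end

theory Submission
  imports Defs "HOL-Probability.Probability" "HOL-Real_Asymp.Real_Asymp"
begin

(* Write b_j = (j!) powr (-1/nu) * r^j for the terms of ftilde. Since
   (j+1) * b_(j+1) powr nu = r powr nu * b_j powr nu, Young's inequality
   A powr nu * B powr (1-nu) <= nu A + (1-nu) B, applied to two consecutive terms, compares each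
   term of the series in (A.3) and (A.4) with a convex combination of neighbouring terms; summing
   gives (A.3) and (A.4), and termwise differentiation turns them into (A.5) and (A.6). By (A.5),
   ftilde r * exp (-r powr nu / nu) decreases and Fbig r * exp (-r powr nu / nu) increases,
   which gives (A.7).

   For (A.8) put x = r powr nu, so that b_j = (x^j / j!) powr (1/nu). Divide the Poisson weights
   x^j / j! by the largest one, at j = floor x. On the scale sqrt x around the mode the ratios
   converge to exp (-t^2/2) and are dominated by an integrable exponential, so the sum of their
   q-th powers is sqrt (2 pi x / q) (1 + o(1)). Comparing q = 1/nu (ftilde) with q = 1 (where
   the weights sum to exp x) eliminates the largest weight, so no Stirling formula is needed. *)

section \<open>Power series and exponentially weighted monotonicity\<close>

lemma
  fixes c :: "nat \<Rightarrow> real"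
  assumes summable: "\<And>y. summable (\<lambda>n. c n * y ^ n)"
  shows summable_Suc_mult_powser: "summable (\<lambda>n. real (Suc n) * c n * r ^ n)"
    and times_powser_has_real_derivative:
      "((\<lambda>y. y * (\<Sum>n. c n * y ^ n)) has_real_derivative (\<Sum>n. real (Suc n) * c n * r ^ n)) (at r)"
proof -
  define e where "e n = (case n of 0 \<Rightarrow> 0 | Suc k \<Rightarrow> c k)" for n
  have e_Suc: "e (Suc n) * y ^ Suc n = y * (c n * y ^ n)" for n y
    by (simp add: e_def)
  have summable_e: "summable (\<lambda>n. e n * y ^ n)" for y
    by (subst summable_Suc_iff[symmetric]) (simp only: e_Suc summable_mult summable)
  have times_eq: "y * (\<Sum>n. c n * y ^ n) = (\<Sum>n. e n * y ^ n)" for y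
  proof -
    have "(\<Sum>n. e n * y ^ n) = (\<Sum>n. e (Suc n) * y ^ Suc n)"
      using suminf_split_head[OF summable_e[of y]] by (simp add: e_def)
    also have "\<dots> = y * (\<Sum>n. c n * y ^ n)"
      by (simp only: e_Suc suminf_mult[OF summable])
    finally show ?thesis ..
  qed
  have diffs_e: "diffs e n * y ^ n = real (Suc n) * c n * y ^ n" for n y
    by (simp add: diffs_def e_def)
  show "summable (\<lambda>n. real (Suc n) * c n * r ^ n)"
    using termdiff_converges_all[OF summable_e] by (simp only: diffs_e)
  show "((\<lambda>y. y * (\<Sum>n. c n * y ^ n)) has_real_derivative (\<Sum>n. real (Suc n) * c n * r ^ n)) (at r)"
    using termdiffs_strong_converges_everywhere[OF summable_e] by (simp only: times_eq diffs_e)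
qed

lemma powser_integral_has_real_derivative:
  fixes c :: "nat \<Rightarrow> real"
  assumes summable: "\<And>y. summable (\<lambda>n. c n * y ^ n)"
  shows "((\<lambda>y. \<Sum>n. c n / real (Suc n) * y ^ Suc n) has_real_derivative (\<Sum>n. c n * r ^ n)) (at r)"
proof -
  define e where "e n = (case n of 0 \<Rightarrow> 0 | Suc k \<Rightarrow> c k / real (Suc k))" for n
  have e_Suc: "e (Suc n) * y ^ Suc n = y * (c n / real (Suc n) * y ^ n)" for n y
    by (simp add: e_def)
  have summable_e: "summable (\<lambda>n. e n * y ^ n)" for y
  proof -
    have "summable (\<lambda>n. norm (c n * y ^ n))"
      using powser_insidea[OF summable[of "\<bar>y\<bar> + 1"]] by simp
    then have "summable (\<lambda>n. c n / real (Suc n) * y ^ n)"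
      by (rule summable_comparison_test') (simp add: abs_mult divide_le_eq_1 field_split_simps)
    then show ?thesis
      by (subst summable_Suc_iff[symmetric]) (simp only: e_Suc summable_mult)
  qed
  have integral_eq: "(\<Sum>n. c n / real (Suc n) * y ^ Suc n) = (\<Sum>n. e n * y ^ n)" for y
    using suminf_split_head[OF summable_e[of y]] by (simp add: e_def)
  have diffs_e: "diffs e = c"
    by (simp add: diffs_def e_def fun_eq_iff)
  show ?thesis
    using termdiffs_strong_converges_everywhere[OF summable_e] by (simp only: integral_eq diffs_e)
qed

lemma DERIV_le_imp_exp_weighted_decreasing:
  fixes f h f' h' :: "real \<Rightarrow> real"
  assumes "s \<le> t" "continuous_on {s..t} f" "continuous_on {s..t} h"
    and "\<And>y. s < y \<Longrightarrow> y < t \<Longrightarrow> (f has_real_derivative f' y) (at y)"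
    and "\<And>y. s < y \<Longrightarrow> y < t \<Longrightarrow> (h has_real_derivative h' y) (at y)"
    and "\<And>y. s < y \<Longrightarrow> y < t \<Longrightarrow> f' y \<le> h' y * f y"
  shows "f t / exp (h t) \<le> f s / exp (h s)"
proof -
  let ?G = "\<lambda>y. - (f y * exp (- h y))"
  have "?G s \<le> ?G t"
  proof (rule DERIV_nonneg_imp_increasing_open[OF \<open>s \<le> t\<close>])
    fix y assume y: "s < y" "y < t"
    have "(?G has_real_derivative exp (- h y) * (h' y * f y - f' y)) (at y)"
      using DERIV_minus[OF DERIV_mult[OF assms(4)[OF y] DERIV_fun_exp[OF DERIV_minus[OF assms(5)[OF y]]]]]
      by (simp add: algebra_simps)
    moreover have "0 \<le> exp (- h y) * (h' y * f y - f' y)"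
      using assms(6)[OF y] by simp
    ultimately show "\<exists>d. (?G has_real_derivative d) (at y) \<and> 0 \<le> d" by blast
  next
    show "continuous_on {s..t} ?G"
      using assms(2,3) by (intro continuous_intros)
  qed
  then show ?thesis by (simp add: exp_minus field_simps)
qed

lemma DERIV_ge_imp_exp_weighted_increasing:
  fixes f h f' h' :: "real \<Rightarrow> real"
  assumes "s \<le> t" "continuous_on {s..t} f" "continuous_on {s..t} h"
    and "\<And>y. s < y \<Longrightarrow> y < t \<Longrightarrow> (f has_real_derivative f' y) (at y)"
    and "\<And>y. s < y \<Longrightarrow> y < t \<Longrightarrow> (h has_real_derivative h' y) (at y)"
    and "\<And>y. s < y \<Longrightarrow> y < t \<Longrightarrow> h' y * f y \<le> f' y"
  shows "f s / exp (h s) \<le> f t / exp (h t)"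
  using DERIV_le_imp_exp_weighted_decreasing[of s t "\<lambda>y. - f y" h "\<lambda>y. - f' y" h'] assms
  by (simp add: continuous_on_minus DERIV_minus)

lemma inverse_one_plus_le_exp:
  fixes u :: real
  assumes "0 \<le> u"
  shows "1 / (1 + u) \<le> exp (u\<^sup>2 - u)"
proof -
  have "1 / (1 + u) = 1 - u / (1 + u)"
    using assms by (simp add: field_simps)
  also have "\<dots> \<le> exp (- (u / (1 + u)))"
    using exp_ge_add_one_self[of "- (u / (1 + u))"] by simp
  also have "\<dots> \<le> exp (u\<^sup>2 - u)"
  proof -
    have "u - u\<^sup>2 \<le> u / (1 + u)"
      using assms by (simp add: field_simps power2_eq_square)
    then show ?thesis by simp
  qed
  finally show ?thesis .
qed

lemma inverse_one_plus_le_exp_half: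
  fixes v :: real
  assumes "0 \<le> v" "v \<le> 1"
  shows "1 / (1 + v) \<le> exp (- v / 2)"
proof -
  have "1 / (1 + v) \<le> 1 - v / 2"
    using assms by (simp add: field_simps) (simp add: mult_left_le algebra_simps)
  also have "\<dots> \<le> exp (- v / 2)"
    using exp_ge_add_one_self[of "- v / 2"] by simp
  finally show ?thesis .
qed

section \<open>Poisson weights around their mode\<close>

definition poisson_mode :: "real \<Rightarrow> nat" where
  "poisson_mode x = nat \<lfloor>x\<rfloor>"

definition poisson_ratio :: "real \<Rightarrow> nat \<Rightarrow> real" where
  "poisson_ratio x j = (x ^ j / fact j) / (x ^ poisson_mode x / fact (poisson_mode x))"

lemma poisson_mode_bounds:
  assumes "1 \<le> x"
  shows "real (poisson_mode x) \<le> x" "x < real (poisson_mode x) + 1" "1 \<le> poisson_mode x"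
  using assms unfolding poisson_mode_def by linarith+

lemma poisson_ratio_pos: "0 < x \<Longrightarrow> 0 < poisson_ratio x j"
  by (simp add: poisson_ratio_def)

lemma poisson_ratio_mode: "0 < x \<Longrightarrow> poisson_ratio x (poisson_mode x) = 1"
  by (simp add: poisson_ratio_def)

lemma poisson_ratio_Suc: "0 < x \<Longrightarrow> poisson_ratio x (Suc j) = poisson_ratio x j * (x / real (Suc j))"
  by (simp add: poisson_ratio_def field_simps)

lemma poisson_ratio_sums:
  assumes "0 < x"
  shows "poisson_ratio x sums (exp x / (x ^ poisson_mode x / fact (poisson_mode x)))"
proof -
  have "(\<lambda>j. x ^ j / fact j) sums exp x"
    using exp_converges[of x] by (simp add: divide_inverse mult.commute scaleR_conv_of_real)
  then show ?thesis
    unfolding poisson_ratio_def[abs_def] by (rule sums_divide)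
qed

context
  fixes x :: real
  assumes x_ge_1: "1 \<le> x"
begin

lemma poisson_ratio_below_mode_Suc:
  assumes "Suc l \<le> poisson_mode x"
  shows "poisson_ratio x (poisson_mode x - Suc l)
    = poisson_ratio x (poisson_mode x - l) * ((real (poisson_mode x) - real l) / x)"
proof -
  have "poisson_mode x - l = Suc (poisson_mode x - Suc l)"
    using assms by simp
  then show ?thesis
    using poisson_ratio_Suc[of x "poisson_mode x - Suc l"] x_ge_1 assms
    by (simp add: field_simps of_nat_diff)
qed

lemma poisson_ratio_below_mode_le:
  "l \<le> poisson_mode x \<Longrightarrow> poisson_ratio x (poisson_mode x - l) \<le> exp (- (real l * (real l - 1)) / (2 * x))"
proof (induction l)
  case 0
  then show ?case using poisson_ratio_mode x_ge_1 by simp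
next
  case (Suc l)
  have factor: "(real (poisson_mode x) - real l) / x \<le> exp (- real l / x)"
  proof -
    have "(real (poisson_mode x) - real l) / x \<le> 1 + (- real l / x)"
      using poisson_mode_bounds[OF x_ge_1] x_ge_1 by (simp add: field_simps)
    also have "\<dots> \<le> exp (- real l / x)"
      by (rule exp_ge_add_one_self)
    finally show ?thesis .
  qed
  have "0 \<le> (real (poisson_mode x) - real l) / x"
    using Suc.prems x_ge_1 by auto
  then have "poisson_ratio x (poisson_mode x - Suc l)
      \<le> exp (- (real l * (real l - 1)) / (2 * x)) * exp (- real l / x)"
    unfolding poisson_ratio_below_mode_Suc[OF Suc.prems]
    using Suc factor poisson_ratio_pos[of x] x_ge_1 by (intro mult_mono) (auto simp: less_imp_le)
  also have "\<dots> = exp (- (real (Suc l) * (real (Suc l) - 1)) / (2 * x))"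
    using x_ge_1 by (simp add: exp_add[symmetric] field_simps)
  finally show ?case .
qed

lemma poisson_ratio_above_mode_le_1: "poisson_ratio x (poisson_mode x + k) \<le> 1"
proof (induction k)
  case 0
  then show ?case using poisson_ratio_mode x_ge_1 by simp
next
  case (Suc k)
  have "x / real (Suc (poisson_mode x + k)) \<le> 1"
    using poisson_mode_bounds[OF x_ge_1] by (simp add: field_simps)
  then have "poisson_ratio x (poisson_mode x + k) * (x / real (Suc (poisson_mode x + k))) \<le> 1 * 1"
    using Suc.IH poisson_ratio_pos[of x] x_ge_1 by (intro mult_mono) (auto simp: less_imp_le)
  then show ?case using poisson_ratio_Suc x_ge_1 by simp
qed

lemma poisson_ratio_le_1: "poisson_ratio x j \<le> 1"
proof (cases "poisson_mode x \<le> j")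
  case True
  then show ?thesis
    using poisson_ratio_above_mode_le_1[of "j - poisson_mode x"] by simp
next
  case False
  define l where "l = poisson_mode x - j"
  have "0 \<le> real l * (real l - 1)"
    by (cases l) auto
  then have bound_le_1: "exp (- (real l * (real l - 1)) / (2 * x)) \<le> 1"
    using x_ge_1 by (auto intro!: divide_nonpos_pos)
  have "poisson_ratio x j = poisson_ratio x (poisson_mode x - l)"
    using False by (simp add: l_def)
  also have "\<dots> \<le> exp (- (real l * (real l - 1)) / (2 * x))"
    by (rule poisson_ratio_below_mode_le) (simp add: l_def)
  finally show ?thesis
    using bound_le_1 by linarith
qed

lemma poisson_ratio_above_mode_ge:
  "exp (- (real k * (real k + 1)) / (2 * x)) \<le> poisson_ratio x (poisson_mode x + k)"
proof (induction k)
  case 0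
  then show ?case using poisson_ratio_mode x_ge_1 by simp
next
  case (Suc k)
  have factor: "exp (- ((real k + 1) / x)) \<le> x / real (Suc (poisson_mode x + k))"
  proof -
    have "real (Suc (poisson_mode x + k)) \<le> x * (1 + (real k + 1) / x)"
      using poisson_mode_bounds[OF x_ge_1] x_ge_1 by (simp add: field_simps)
    also have "\<dots> \<le> x * exp ((real k + 1) / x)"
      using x_ge_1 exp_ge_add_one_self[of "(real k + 1) / x"] by (intro mult_left_mono) auto
    finally have "exp (- ((real k + 1) / x)) * real (Suc (poisson_mode x + k))
        \<le> exp (- ((real k + 1) / x)) * (x * exp ((real k + 1) / x))"
      by (rule mult_left_mono) simp
    also have "\<dots> = x"
      by (simp add: exp_minus)
    finally show ?thesis
      by (simp add: pos_le_divide_eq)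
  qed
  have "exp (- (real (Suc k) * (real (Suc k) + 1)) / (2 * x))
      = exp (- (real k * (real k + 1)) / (2 * x)) * exp (- ((real k + 1) / x))"
    using x_ge_1 by (simp add: exp_add[symmetric] field_simps)
  also have "\<dots> \<le> poisson_ratio x (poisson_mode x + k) * (x / real (Suc (poisson_mode x + k)))"
    using Suc.IH factor poisson_ratio_pos[of x] x_ge_1 by (intro mult_mono) (auto simp: less_imp_le)
  also have "\<dots> = poisson_ratio x (poisson_mode x + Suc k)"
    using poisson_ratio_Suc x_ge_1 by simp
  finally show ?case .
qed

lemma poisson_ratio_above_mode_le:
  "poisson_ratio x (poisson_mode x + k) \<le> exp (- (real k * (real k - 1)) / (2 * x) + real k ^ 3 / x\<^sup>2)"
proof (induction k)
  case 0
  then show ?case using poisson_ratio_mode x_ge_1 by simp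
next
  case (Suc k)
  have factor: "x / real (Suc (poisson_mode x + k)) \<le> exp ((real k / x)\<^sup>2 - real k / x)"
  proof -
    have "x / real (Suc (poisson_mode x + k)) \<le> x / (x + real k)"
      using poisson_mode_bounds[OF x_ge_1] x_ge_1 by (intro divide_left_mono) auto
    also have "\<dots> = 1 / (1 + real k / x)"
      using x_ge_1 by (simp add: field_simps)
    also have "\<dots> \<le> exp ((real k / x)\<^sup>2 - real k / x)"
      using x_ge_1 by (intro inverse_one_plus_le_exp) auto
    finally show ?thesis .
  qed
  have "poisson_ratio x (poisson_mode x + Suc k)
      = poisson_ratio x (poisson_mode x + k) * (x / real (Suc (poisson_mode x + k)))"
    using poisson_ratio_Suc x_ge_1 by simp
  also have "\<dots> \<le> exp (- (real k * (real k - 1)) / (2 * x) + real k ^ 3 / x\<^sup>2)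
      * exp ((real k / x)\<^sup>2 - real k / x)"
    using Suc.IH factor poisson_ratio_pos[of x] x_ge_1 by (intro mult_mono) (auto simp: less_imp_le)
  also have "\<dots> \<le> exp (- (real (Suc k) * (real (Suc k) - 1)) / (2 * x) + real (Suc k) ^ 3 / x\<^sup>2)"
  proof -
    have "real k ^ 3 + real k ^ 2 \<le> (real k + 1) ^ 3"
      by (simp add: power2_eq_square power3_eq_cube algebra_simps)
    then have "real k ^ 3 / x\<^sup>2 + (real k / x)\<^sup>2 \<le> real (Suc k) ^ 3 / x\<^sup>2"
      using x_ge_1 by (simp add: power_divide add_divide_distrib[symmetric] divide_right_mono add.commute)
    moreover have "- (real k * (real k - 1)) / (2 * x) - real k / x
        = - (real (Suc k) * (real (Suc k) - 1)) / (2 * x)"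
      using x_ge_1 by (simp add: field_simps)
    ultimately show ?thesis
      unfolding exp_add[symmetric] exp_le_cancel_iff by linarith
  qed
  finally show ?case .
qed

lemma poisson_ratio_below_mode_ge:
  "2 * real l \<le> x \<Longrightarrow>
    exp (- (real l * (real l + 1)) / (2 * x) - 2 * real l ^ 3 / x\<^sup>2) \<le> poisson_ratio x (poisson_mode x - l)"
proof (induction l)
  case 0
  then show ?case using poisson_ratio_mode x_ge_1 by simp
next
  case (Suc l)
  have l_le: "Suc l \<le> poisson_mode x"
    using Suc.prems poisson_mode_bounds[OF x_ge_1] by simp
  define w where "w = (real l + 1) / x"
  have w: "0 \<le> w" "w \<le> 1/2"
    using Suc.prems x_ge_1 by (auto simp: w_def field_simps)
  have factor: "exp (- w - 2 * w\<^sup>2) \<le> (real (poisson_mode x) - real l) / x"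
  proof -
    have "exp (- w - 2 * w\<^sup>2) \<le> 1 - w"
      using ln_one_minus_pos_lower_bound[OF w] w by (simp add: ln_ge_iff)
    also have "\<dots> = (x - real l - 1) / x"
      using x_ge_1 by (simp add: w_def field_simps)
    also have "\<dots> \<le> (real (poisson_mode x) - real l) / x"
      using poisson_mode_bounds[OF x_ge_1] x_ge_1 by (intro divide_right_mono) auto
    finally show ?thesis .
  qed
  have "exp (- (real (Suc l) * (real (Suc l) + 1)) / (2 * x) - 2 * real (Suc l) ^ 3 / x\<^sup>2)
      \<le> exp (- (real l * (real l + 1)) / (2 * x) - 2 * real l ^ 3 / x\<^sup>2) * exp (- w - 2 * w\<^sup>2)"
  proof -
    have "real l ^ 3 + (real l + 1)\<^sup>2 \<le> (real l + 1) ^ 3"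
      by (simp add: power2_eq_square power3_eq_cube algebra_simps)
    then have "2 * real l ^ 3 / x\<^sup>2 + 2 * w\<^sup>2 \<le> 2 * real (Suc l) ^ 3 / x\<^sup>2"
      using x_ge_1
      by (simp add: w_def power_divide add_divide_distrib[symmetric] divide_right_mono add.commute)
    moreover have "- (real l * (real l + 1)) / (2 * x) - w = - (real (Suc l) * (real (Suc l) + 1)) / (2 * x)"
      using x_ge_1 by (simp add: w_def field_simps)
    ultimately show ?thesis
      unfolding exp_add[symmetric] exp_le_cancel_iff by linarith
  qed
  also have "\<dots> \<le> poisson_ratio x (poisson_mode x - l) * ((real (poisson_mode x) - real l) / x)"
    using Suc factor poisson_ratio_pos[of x] x_ge_1 by (intro mult_mono) (auto simp: less_imp_le)
  also have "\<dots> = poisson_ratio x (poisson_mode x - Suc l)"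
    using poisson_ratio_below_mode_Suc[OF l_le] by simp
  finally show ?case .
qed

lemma poisson_ratio_Suc_factor_le:
  assumes "sqrt x \<le> real k"
  shows "x / real (Suc (poisson_mode x + k)) \<le> exp (- 1 / (2 * sqrt x))"
proof -
  define s where "s = sqrt x"
  have s: "1 \<le> s" "x = s * s"
    using x_ge_1 by (auto simp: s_def)
  have le: "x + s \<le> real (Suc (poisson_mode x + k))"
    using poisson_mode_bounds(2)[OF x_ge_1] assms by (simp add: s_def)
  have pos: "0 < real (Suc (poisson_mode x + k)) * (x + s)"
    using x_ge_1 s(1) by simp
  have "x / real (Suc (poisson_mode x + k)) \<le> x / (x + s)"
    by (rule divide_left_mono[OF le _ pos]) (use x_ge_1 in simp)
  also have "\<dots> = 1 / (1 + 1 / s)"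
  proof -
    have "0 < s" "0 < s + 1" "0 < s * s + s"
      using s(1) by (auto simp: add_pos_pos)
    then show ?thesis
      unfolding s(2) by (simp add: field_simps)
  qed
  also have "\<dots> \<le> exp (- (1 / s) / 2)"
    using s(1) by (intro inverse_one_plus_le_exp_half) auto
  finally show ?thesis
    by (simp add: s_def mult.commute)
qed

lemma poisson_ratio_above_mode_tail:
  "poisson_ratio x (poisson_mode x + k) \<le> exp (1 - real k / (2 * sqrt x))"
proof (induction k)
  case 0
  then show ?case using poisson_ratio_mode x_ge_1 by simp
next
  case (Suc k)
  have "1 \<le> sqrt x"
    using x_ge_1 by simp
  show ?case
  proof (cases "sqrt x \<le> real k")
    case True
    have "poisson_ratio x (poisson_mode x + Suc k)
        = poisson_ratio x (poisson_mode x + k) * (x / real (Suc (poisson_mode x + k)))"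
      using poisson_ratio_Suc x_ge_1 by simp
    also have "\<dots> \<le> exp (1 - real k / (2 * sqrt x)) * exp (- 1 / (2 * sqrt x))"
      using Suc.IH poisson_ratio_Suc_factor_le[OF True] poisson_ratio_pos[of x] x_ge_1
      by (intro mult_mono) (auto simp: less_imp_le)
    also have "\<dots> = exp (1 - real (Suc k) / (2 * sqrt x))"
      by (simp add: exp_add[symmetric] add_divide_distrib diff_divide_distrib)
    finally show ?thesis .
  next
    case False
    with \<open>1 \<le> sqrt x\<close> have "real k + 1 \<le> 2 * sqrt x"
      by linarith
    then have "1 \<le> exp (1 - real (Suc k) / (2 * sqrt x))"
      using \<open>1 \<le> sqrt x\<close> by (simp add: field_simps)
    then show ?thesis
      using poisson_ratio_le_1[of "poisson_mode x + Suc k"] by linarith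
  qed
qed

end

lemma poisson_ratio_powr_le:
  assumes "1 \<le> x" "1 \<le> q"
  shows "poisson_ratio x j powr q \<le> poisson_ratio x j"
proof -
  have "poisson_ratio x j powr q \<le> poisson_ratio x j powr 1"
    using poisson_ratio_pos[of x j] poisson_ratio_le_1[OF assms(1), of j] assms by (intro powr_mono') auto
  then show ?thesis
    using poisson_ratio_pos[of x j] assms by simp
qed

definition poisson_ratio_powsum :: "real \<Rightarrow> real \<Rightarrow> real" where
  "poisson_ratio_powsum q x = (\<Sum>j. poisson_ratio x j powr q)"

lemma summable_poisson_ratio_powr:
  assumes "1 \<le> x" "1 \<le> q"
  shows "summable (\<lambda>j. poisson_ratio x j powr q)"
proof (rule summable_comparison_test')
  show "summable (poisson_ratio x)"
    using sums_summable[OF poisson_ratio_sums] assms by simp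
  show "norm (poisson_ratio x j powr q) \<le> poisson_ratio x j" for j
    using poisson_ratio_powr_le[OF assms] by simp
qed

lemma poisson_ratio_powsum_1:
  assumes "0 < x"
  shows "poisson_ratio_powsum 1 x = exp x / (x ^ poisson_mode x / fact (poisson_mode x))"
  using poisson_ratio_sums[OF assms] poisson_ratio_pos[OF assms]
  by (simp add: poisson_ratio_powsum_def abs_of_pos sums_iff)

(* poisson_step q x equals (poisson_ratio x j) powr q on poisson_cell x j, a cell of length
   1 / sqrt x; the cell of the mode starts at t = 0. *)
definition poisson_cell :: "real \<Rightarrow> nat \<Rightarrow> real set" where
  "poisson_cell x j =
    {(real j - real (poisson_mode x)) / sqrt x ..< (real j - real (poisson_mode x) + 1) / sqrt x}"

definition poisson_step :: "real \<Rightarrow> real \<Rightarrow> real \<Rightarrow> real" where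
  "poisson_step q x t =
    (let i = int (poisson_mode x) + \<lfloor>t * sqrt x\<rfloor> in if 0 \<le> i then poisson_ratio x (nat i) powr q else 0)"

lemma mem_poisson_cell_iff:
  assumes "0 < x"
  shows "t \<in> poisson_cell x j \<longleftrightarrow> \<lfloor>t * sqrt x\<rfloor> = int j - int (poisson_mode x)"
proof -
  have "t \<in> poisson_cell x j \<longleftrightarrow>
      real j - real (poisson_mode x) \<le> t * sqrt x \<and> t * sqrt x < real j - real (poisson_mode x) + 1"
    unfolding poisson_cell_def using assms by (simp add: field_simps)
  also have "\<dots> \<longleftrightarrow> \<lfloor>t * sqrt x\<rfloor> = int j - int (poisson_mode x)"
    by (simp add: floor_eq_iff)
  finally show ?thesis .
qed

lemma poisson_step_measurable [measurable]: "poisson_step q x \<in> borel_measurable borel"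
proof -
  define H where
    "H i = (if 0 \<le> int (poisson_mode x) + i then poisson_ratio x (nat (int (poisson_mode x) + i)) powr q else 0)"
    for i
  have "poisson_step q x = (\<lambda>t. H \<lfloor>t * sqrt x\<rfloor>)"
    by (simp add: poisson_step_def H_def Let_def fun_eq_iff)
  also have "(\<lambda>t. H \<lfloor>t * sqrt x\<rfloor>) \<in> borel_measurable borel"
    by measurable
  finally show ?thesis .
qed

lemma poisson_step_nonneg: "0 \<le> poisson_step q x t"
  by (simp add: poisson_step_def Let_def)

lemma poisson_step_eq_suminf:
  assumes "0 < x"
  shows "ennreal (poisson_step q x t)
    = (\<Sum>j. ennreal (poisson_ratio x j powr q) * indicator (poisson_cell x j) t)"
proof (cases "0 \<le> int (poisson_mode x) + \<lfloor>t * sqrt x\<rfloor>")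
  case True
  define j0 where "j0 = nat (int (poisson_mode x) + \<lfloor>t * sqrt x\<rfloor>)"
  have "(\<lambda>j. ennreal (poisson_ratio x j powr q) * indicator (poisson_cell x j) t)
      = (\<lambda>j. if j = j0 then ennreal (poisson_ratio x j powr q) else 0)"
    using True by (auto simp: fun_eq_iff mem_poisson_cell_iff[OF assms] j0_def split: split_indicator)
  then show ?thesis
    using True sums_single[of j0 "\<lambda>j. ennreal (poisson_ratio x j powr q)"]
    by (simp add: sums_iff poisson_step_def Let_def j0_def)
next
  case False
  then have "(\<lambda>j. ennreal (poisson_ratio x j powr q) * indicator (poisson_cell x j) t) = (\<lambda>j. 0)"
    by (auto simp: fun_eq_iff mem_poisson_cell_iff[OF assms] split: split_indicator)
  then show ?thesis
    using False by (simp add: poisson_step_def Let_def)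
qed

lemma poisson_step_has_integral:
  assumes "1 \<le> x" "1 \<le> q"
  shows "has_bochner_integral lborel (poisson_step q x) (poisson_ratio_powsum q x / sqrt x)"
proof (rule has_bochner_integral_nn_integral)
  have x_pos: "0 < x" using assms by simp
  have cell_measure: "emeasure lborel (poisson_cell x j) = ennreal (1 / sqrt x)" for j
    unfolding poisson_cell_def using x_pos by (subst emeasure_lborel_Ico) (auto simp: field_simps)
  have "(\<integral>\<^sup>+ t. ennreal (poisson_step q x t) \<partial>lborel)
      = (\<Sum>j. \<integral>\<^sup>+ t. ennreal (poisson_ratio x j powr q) * indicator (poisson_cell x j) t \<partial>lborel)"
    unfolding poisson_step_eq_suminf[OF x_pos]
    by (rule nn_integral_suminf) (simp add: poisson_cell_def)
  also have "\<dots> = (\<Sum>j. ennreal (poisson_ratio x j powr q) * emeasure lborel (poisson_cell x j))"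
    by (subst nn_integral_cmult_indicator) (auto simp: poisson_cell_def)
  also have "\<dots> = (\<Sum>j. ennreal (poisson_ratio x j powr q / sqrt x))"
    using x_pos by (simp add: cell_measure ennreal_mult'[symmetric] divide_inverse)
  also have "\<dots> = ennreal (\<Sum>j. poisson_ratio x j powr q / sqrt x)"
    using summable_poisson_ratio_powr[OF assms] x_pos
    by (intro suminf_ennreal2 summable_divide) auto
  also have "\<dots> = ennreal (poisson_ratio_powsum q x / sqrt x)"
    using summable_poisson_ratio_powr[OF assms] by (simp add: poisson_ratio_powsum_def suminf_divide)
  finally show "(\<integral>\<^sup>+ t. ennreal (poisson_step q x t) \<partial>lborel) = ennreal (poisson_ratio_powsum q x / sqrt x)" .
  show "0 \<le> poisson_ratio_powsum q x / sqrt x"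
    unfolding poisson_ratio_powsum_def
    using summable_poisson_ratio_powr[OF assms] assms by (intro divide_nonneg_nonneg suminf_nonneg) auto
qed (auto simp: poisson_step_nonneg)

lemma gaussian_exponent_tendsto:
  fixes u :: "real \<Rightarrow> real"
  assumes "((\<lambda>x. u x / sqrt x) \<longlongrightarrow> s) at_top"
  shows "((\<lambda>x. exp (- (u x * (u x + c)) / (2 * x) + d * u x ^ 3 / x\<^sup>2)) \<longlongrightarrow> exp (- s\<^sup>2 / 2)) at_top"
proof -
  define v where "v x = u x / sqrt x" for x
  define w where "w x = 1 / sqrt x" for x :: real
  have "(v \<longlongrightarrow> s) at_top"
    using assms by (simp add: v_def[abs_def])
  moreover have "(w \<longlongrightarrow> 0) at_top"
    unfolding w_def by real_asymp
  ultimately have "((\<lambda>x. exp (- ((v x)\<^sup>2 + c * v x * w x) / 2 + d * v x ^ 3 * w x))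
      \<longlongrightarrow> exp (- (s\<^sup>2 + c * s * 0) / 2 + d * s ^ 3 * 0)) at_top"
    by (intro tendsto_intros) simp_all
  moreover have "\<forall>\<^sub>F x in at_top. exp (- ((v x)\<^sup>2 + c * v x * w x) / 2 + d * v x ^ 3 * w x)
      = exp (- (u x * (u x + c)) / (2 * x) + d * u x ^ 3 / x\<^sup>2)"
    using eventually_gt_at_top[of 0]
  proof eventually_elim
    case (elim x)
    define r where "r = sqrt x"
    have "0 < r" "x = r * r"
      using elim by (auto simp: r_def)
    then show ?case
      unfolding v_def w_def r_def[symmetric] by (simp add: field_simps power2_eq_square power3_eq_cube)
  qed
  ultimately show ?thesis
    by (simp add: Lim_transform_eventually)
qed

lemma floor_mult_sqrt_tendsto: "((\<lambda>x. of_int \<lfloor>t * sqrt x\<rfloor> / sqrt x) \<longlongrightarrow> t) at_top"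
proof (rule tendsto_sandwich[of "\<lambda>x. t - 1 / sqrt x" _ _ "\<lambda>x. t"])
  show "\<forall>\<^sub>F x in at_top. t - 1 / sqrt x \<le> of_int \<lfloor>t * sqrt x\<rfloor> / sqrt x"
    using eventually_gt_at_top[of 0]
  proof eventually_elim
    case (elim x)
    then show ?case
      using floor_correct[of "t * sqrt x"] by (simp add: pos_le_divide_eq left_diff_distrib)
  qed
  show "\<forall>\<^sub>F x in at_top. of_int \<lfloor>t * sqrt x\<rfloor> / sqrt x \<le> t"
    using eventually_gt_at_top[of 0]
  proof eventually_elim
    case (elim x)
    then show ?case
      by (simp add: pos_divide_le_eq)
  qed
  show "((\<lambda>x. t - 1 / sqrt x) \<longlongrightarrow> t) at_top"
    by real_asymp
qed simp

lemma eventually_below_poisson_mode: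
  assumes "((\<lambda>x. real (L x) / sqrt x) \<longlongrightarrow> t) at_top"
  shows "\<forall>\<^sub>F x in at_top. 1 \<le> x \<and> 2 * real (L x) \<le> x \<and> L x \<le> poisson_mode x"
proof -
  have "\<forall>\<^sub>F x in at_top. real (L x) / sqrt x < t + 1"
    using assms by (rule order_tendstoD) simp
  moreover have "\<forall>\<^sub>F x in at_top. 2 * (t + 1) * sqrt x \<le> x"
    by real_asymp
  moreover have "\<forall>\<^sub>F x in at_top. 1 \<le> (x::real)"
    by (rule eventually_ge_at_top)
  ultimately show ?thesis
  proof eventually_elim
    case (elim x)
    then have "real (L x) < (t + 1) * sqrt x"
      by (simp add: divide_less_eq)
    with elim have "2 * real (L x) \<le> x"
      by linarith
    with elim poisson_mode_bounds[of x] show ?case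
      by linarith
  qed
qed

lemma poisson_ratio_above_mode_tendsto:
  assumes "((\<lambda>x. real (K x) / sqrt x) \<longlongrightarrow> t) at_top"
  shows "((\<lambda>x. poisson_ratio x (poisson_mode x + K x)) \<longlongrightarrow> exp (- t\<^sup>2 / 2)) at_top"
proof (rule tendsto_sandwich)
  show "\<forall>\<^sub>F x in at_top.
      exp (- (real (K x) * (real (K x) + 1)) / (2 * x)) \<le> poisson_ratio x (poisson_mode x + K x)"
    using eventually_ge_at_top[of 1] by eventually_elim (rule poisson_ratio_above_mode_ge)
  show "\<forall>\<^sub>F x in at_top. poisson_ratio x (poisson_mode x + K x)
      \<le> exp (- (real (K x) * (real (K x) - 1)) / (2 * x) + real (K x) ^ 3 / x\<^sup>2)"
    using eventually_ge_at_top[of 1] by eventually_elim (rule poisson_ratio_above_mode_le)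
  show "((\<lambda>x. exp (- (real (K x) * (real (K x) + 1)) / (2 * x))) \<longlongrightarrow> exp (- t\<^sup>2 / 2)) at_top"
    using gaussian_exponent_tendsto[OF assms, of 1 0] by simp
  show "((\<lambda>x. exp (- (real (K x) * (real (K x) - 1)) / (2 * x) + real (K x) ^ 3 / x\<^sup>2))
      \<longlongrightarrow> exp (- t\<^sup>2 / 2)) at_top"
    using gaussian_exponent_tendsto[OF assms, of "-1" 1] by simp
qed

lemma poisson_ratio_below_mode_tendsto:
  assumes "((\<lambda>x. real (L x) / sqrt x) \<longlongrightarrow> t) at_top"
  shows "((\<lambda>x. poisson_ratio x (poisson_mode x - L x)) \<longlongrightarrow> exp (- t\<^sup>2 / 2)) at_top"
proof (rule tendsto_sandwich)
  show "\<forall>\<^sub>F x in at_top. exp (- (real (L x) * (real (L x) + 1)) / (2 * x) - 2 * real (L x) ^ 3 / x\<^sup>2)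
      \<le> poisson_ratio x (poisson_mode x - L x)"
    using eventually_below_poisson_mode[OF assms]
    by eventually_elim (intro poisson_ratio_below_mode_ge, auto)
  show "\<forall>\<^sub>F x in at_top.
      poisson_ratio x (poisson_mode x - L x) \<le> exp (- (real (L x) * (real (L x) - 1)) / (2 * x))"
    using eventually_below_poisson_mode[OF assms]
    by eventually_elim (intro poisson_ratio_below_mode_le, auto)
  show "((\<lambda>x. exp (- (real (L x) * (real (L x) + 1)) / (2 * x) - 2 * real (L x) ^ 3 / x\<^sup>2))
      \<longlongrightarrow> exp (- t\<^sup>2 / 2)) at_top"
    using gaussian_exponent_tendsto[OF assms, of 1 "-2"] by simp
  show "((\<lambda>x. exp (- (real (L x) * (real (L x) - 1)) / (2 * x))) \<longlongrightarrow> exp (- t\<^sup>2 / 2)) at_top"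
    using gaussian_exponent_tendsto[OF assms, of "-1" 0] by simp
qed

lemma poisson_step_above_mode:
  assumes "0 \<le> t" "0 \<le> x"
  shows "poisson_step q x t = poisson_ratio x (poisson_mode x + nat \<lfloor>t * sqrt x\<rfloor>) powr q"
  using assms by (simp add: poisson_step_def Let_def nat_add_distrib)

lemma poisson_step_below_mode:
  assumes "t < 0" "0 \<le> x" "nat (- \<lfloor>t * sqrt x\<rfloor>) \<le> poisson_mode x"
  shows "poisson_step q x t = poisson_ratio x (poisson_mode x - nat (- \<lfloor>t * sqrt x\<rfloor>)) powr q"
proof -
  define L where "L = nat (- \<lfloor>t * sqrt x\<rfloor>)"
  have "t * sqrt x \<le> 0"
    using assms(1,2) by (intro mult_nonpos_nonneg) auto
  then have "\<lfloor>t * sqrt x\<rfloor> = - int L"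
    by (simp add: L_def)
  with assms(3) have "int (poisson_mode x) + \<lfloor>t * sqrt x\<rfloor> = int (poisson_mode x - L)"
    by (simp add: L_def[symmetric] of_nat_diff)
  then show ?thesis
    unfolding poisson_step_def Let_def L_def[symmetric] by simp
qed

lemma poisson_step_tendsto: "((\<lambda>x. poisson_step q x t) \<longlongrightarrow> exp (- t\<^sup>2 / 2) powr q) at_top"
proof (cases "0 \<le> t")
  case True
  define K where "K x = nat \<lfloor>t * sqrt x\<rfloor>" for x
  have "\<forall>\<^sub>F x in at_top. of_int \<lfloor>t * sqrt x\<rfloor> / sqrt x = real (K x) / sqrt x"
    using eventually_ge_at_top[of 0] by eventually_elim (simp add: K_def True)
  with floor_mult_sqrt_tendsto have "((\<lambda>x. real (K x) / sqrt x) \<longlongrightarrow> t) at_top"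
    by (rule Lim_transform_eventually)
  then have "((\<lambda>x. poisson_ratio x (poisson_mode x + K x) powr q) \<longlongrightarrow> exp (- t\<^sup>2 / 2) powr q) at_top"
    by (intro tendsto_powr poisson_ratio_above_mode_tendsto) auto
  moreover have "\<forall>\<^sub>F x in at_top. poisson_ratio x (poisson_mode x + K x) powr q = poisson_step q x t"
    using eventually_ge_at_top[of 0] by eventually_elim (simp add: poisson_step_above_mode True K_def)
  ultimately show ?thesis
    by (rule Lim_transform_eventually)
next
  case False
  define L where "L x = nat (- \<lfloor>t * sqrt x\<rfloor>)" for x
  have "\<forall>\<^sub>F x in at_top. - (of_int \<lfloor>t * sqrt x\<rfloor> / sqrt x) = real (L x) / sqrt x"
    using eventually_ge_at_top[of 0]
  proof eventually_elim
    case (elim x)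
    with False have "\<lfloor>t * sqrt x\<rfloor> \<le> 0"
      using mult_nonpos_nonneg[of t "sqrt x"] by simp
    then show ?case by (simp add: L_def)
  qed
  with tendsto_minus[OF floor_mult_sqrt_tendsto]
  have L_tendsto: "((\<lambda>x. real (L x) / sqrt x) \<longlongrightarrow> - t) at_top"
    by (rule Lim_transform_eventually)
  then have "((\<lambda>x. poisson_ratio x (poisson_mode x - L x) powr q) \<longlongrightarrow> exp (- t\<^sup>2 / 2) powr q) at_top"
    using poisson_ratio_below_mode_tendsto[OF L_tendsto] by (intro tendsto_powr) auto
  moreover have "\<forall>\<^sub>F x in at_top. poisson_ratio x (poisson_mode x - L x) powr q = poisson_step q x t"
    using eventually_below_poisson_mode[OF L_tendsto]
    by eventually_elim (use False in \<open>simp add: poisson_step_below_mode L_def\<close>)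
  ultimately show ?thesis
    by (rule Lim_transform_eventually)
qed

lemma poisson_step_le_exp_above_mode:
  assumes "1 \<le> x" "1 \<le> q" "0 \<le> t"
  shows "poisson_step q x t \<le> exp (3/2 - t / 2)"
proof -
  define s where "s = sqrt x"
  define K where "K = nat \<lfloor>t * s\<rfloor>"
  have s: "1 \<le> s"
    using assms by (simp add: s_def)
  have K: "t * s - 1 \<le> real K"
    using floor_correct[of "t * s"] assms s by (simp add: K_def)
  have "poisson_step q x t = poisson_ratio x (poisson_mode x + K) powr q"
    using assms by (simp add: poisson_step_above_mode K_def s_def)
  also have "\<dots> \<le> exp (1 - real K / (2 * s))"
    using poisson_ratio_powr_le[OF assms(1,2)] poisson_ratio_above_mode_tail[OF assms(1), of K]
    unfolding s_def by (rule order_trans)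
  also have "\<dots> \<le> exp (3/2 - t / 2)"
  proof -
    have "(t * s - 1) / (2 * s) \<le> real K / (2 * s)"
      using K s by (intro divide_right_mono) auto
    moreover have "(t * s - 1) / (2 * s) = t / 2 - 1 / (2 * s)"
      using s by (simp add: field_simps)
    moreover have "1 / (2 * s) \<le> 1 / 2"
      using s by simp
    ultimately show ?thesis
      by simp
  qed
  finally show ?thesis .
qed

lemma quadratic_exponent_le_linear:
  fixes s t l :: real
  assumes "1 \<le> s" "0 \<le> l" "- (t * s) \<le> l"
  shows "- (l * (l - 1)) / (2 * (s * s)) \<le> 3/2 + t / 2"
proof -
  define y where "y = l / s"
  have "- t \<le> y" "0 \<le> y"
    using assms by (auto simp: y_def field_simps)
  have "l * (l - 1) / (s * s) = y\<^sup>2 - y / s"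
    using assms by (simp add: y_def field_simps power2_eq_square)
  moreover have "y / s \<le> y"
    using assms \<open>0 \<le> y\<close> by (simp add: divide_le_eq mult_le_cancel_left1)
  moreover have "y - 1 \<le> y\<^sup>2 - y"
    using zero_le_power2[of "y - 1"] by (simp add: power2_eq_square algebra_simps)
  ultimately show ?thesis
    using \<open>- t \<le> y\<close> by simp
qed

lemma poisson_step_le_exp_below_mode:
  assumes "1 \<le> x" "1 \<le> q" "t < 0"
  shows "poisson_step q x t \<le> exp (3/2 + t / 2)"
proof (cases "nat (- \<lfloor>t * sqrt x\<rfloor>) \<le> poisson_mode x")
  case True
  define s where "s = sqrt x"
  define L where "L = nat (- \<lfloor>t * s\<rfloor>)"
  have s: "1 \<le> s"
    using assms by (simp add: s_def)
  have x_eq: "x = s * s"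
    using assms by (simp add: s_def)
  have "\<lfloor>t * s\<rfloor> \<le> 0"
    using assms s mult_nonpos_nonneg[of t s] by simp
  then have L: "- (t * s) \<le> real L"
    using floor_correct[of "t * s"] by (simp add: L_def)
  have L_le: "L \<le> poisson_mode x"
    using True by (simp add: L_def s_def)
  have "poisson_step q x t = poisson_ratio x (poisson_mode x - L) powr q"
    using assms True by (simp add: poisson_step_below_mode L_def s_def)
  also have "\<dots> \<le> exp (- (real L * (real L - 1)) / (2 * x))"
    using poisson_ratio_powr_le[OF assms(1,2)] poisson_ratio_below_mode_le[OF assms(1) L_le]
    by (rule order_trans)
  also have "\<dots> \<le> exp (3/2 + t / 2)"
    using quadratic_exponent_le_linear[OF s _ L] unfolding x_eq by simp
  finally show ?thesis .
next
  case False
  have "\<lfloor>t * sqrt x\<rfloor> \<le> 0"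
    using assms mult_nonpos_nonneg[of t "sqrt x"] by simp
  with False have "poisson_step q x t = 0"
    by (simp add: poisson_step_def Let_def)
  then show ?thesis by simp
qed

lemma poisson_step_le_exp_abs:
  assumes "1 \<le> x" "1 \<le> q"
  shows "poisson_step q x t \<le> exp (3/2 - \<bar>t\<bar> / 2)"
  using poisson_step_le_exp_above_mode[OF assms] poisson_step_le_exp_below_mode[OF assms]
  by (cases "0 \<le> t") simp_all

lemma integrable_exp_neg_abs:
  assumes "0 < a"
  shows "integrable lborel (\<lambda>t::real. exp (- a * \<bar>t\<bar>))"
proof -
  define P where "P t = indicator {0<..} t *\<^sub>R exp (- (t * a))" for t :: real
  have "integrable lborel P"
    using integrable_I0i_exp_mscale[OF assms] unfolding set_integrable_def P_def by simp
  moreover have "integrable lborel (\<lambda>t. P (0 + (-1) * t))"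
    using lborel_integrable_real_affine_iff[of "-1" P 0] calculation by simp
  moreover have "integrable lborel (indicator {0::real} :: real \<Rightarrow> real)"
    by (intro integrable_real_indicator) auto
  ultimately have "integrable lborel (\<lambda>t. P t + P (0 + (-1) * t) + indicator {0::real} t)"
    by (intro Bochner_Integration.integrable_add)
  also have "(\<lambda>t. P t + P (0 + (-1) * t) + indicator {0::real} t) = (\<lambda>t. exp (- a * \<bar>t\<bar>))"
  proof
    fix t :: real
    consider "0 < t" | "t < 0" | "t = 0" by linarith
    then show "P t + P (0 + (-1) * t) + indicator {0::real} t = exp (- a * \<bar>t\<bar>)"
      by cases (auto simp: P_def indicator_def mult.commute)
  qed
  finally show ?thesis .
qed

lemma integral_exp_neg_square_powr:
  assumes "0 < q"
  shows "(\<integral>t. exp (- t\<^sup>2 / 2) powr q \<partial>lborel) = sqrt (2 * pi / q)"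
proof -
  have "exp (- t\<^sup>2 / 2) powr q = sqrt (2 * pi / q) * normal_density 0 (1 / sqrt q) t" for t
    using assms by (simp add: normal_density_def power_divide real_sqrt_divide exp_powr_real field_simps)
  then show ?thesis
    using assms by simp
qed

lemma poisson_ratio_powsum_tendsto:
  assumes "1 \<le> q"
  shows "((\<lambda>x. poisson_ratio_powsum q x / sqrt x) \<longlongrightarrow> sqrt (2 * pi / q)) at_top"
proof -
  have "integrable lborel (\<lambda>t::real. exp (3/2) * exp (- (1/2) * \<bar>t\<bar>))"
    by (intro integrable_mult_right integrable_exp_neg_abs) simp
  also have "(\<lambda>t::real. exp (3/2) * exp (- (1/2) * \<bar>t\<bar>)) = (\<lambda>t. exp (3/2 - \<bar>t\<bar> / 2))"
    by (simp add: fun_eq_iff exp_add[symmetric] field_simps)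
  finally have dominated: "integrable lborel (\<lambda>t::real. exp (3/2 - \<bar>t\<bar> / 2))" .
  have "((\<lambda>x. integral\<^sup>L lborel (poisson_step q x)) \<longlongrightarrow> (\<integral>t. exp (- t\<^sup>2 / 2) powr q \<partial>lborel)) at_top"
  proof (rule integral_dominated_convergence_at_top[OF _ _ dominated])
    show "AE t in lborel. ((\<lambda>x. poisson_step q x t) \<longlongrightarrow> exp (- t\<^sup>2 / 2) powr q) at_top"
      by (intro AE_I2 poisson_step_tendsto)
    show "\<forall>\<^sub>F x in at_top. AE t in lborel. norm (poisson_step q x t) \<le> exp (3/2 - \<bar>t\<bar> / 2)"
      using eventually_ge_at_top[of 1]
      by eventually_elim (use assms in \<open>simp add: poisson_step_nonneg poisson_step_le_exp_abs\<close>)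
  qed simp_all
  moreover have "\<forall>\<^sub>F x in at_top. integral\<^sup>L lborel (poisson_step q x) = poisson_ratio_powsum q x / sqrt x"
    using eventually_ge_at_top[of 1]
    by eventually_elim (use poisson_step_has_integral assms in \<open>simp add: has_bochner_integral_integral_eq\<close>)
  ultimately show ?thesis
    using integral_exp_neg_square_powr[of q] assms by (simp add: Lim_transform_eventually)
qed

section \<open>The series ftilde and Fbig\<close>

definition ftilde_coeff :: "real \<Rightarrow> nat \<Rightarrow> real" where
  "ftilde_coeff \<nu> j = fact j powr (-1/\<nu>)"

lemma ftilde_coeff_pos: "0 < ftilde_coeff \<nu> j"
  by (simp add: ftilde_coeff_def)

lemma ftilde_coeff_0 [simp]: "ftilde_coeff \<nu> 0 = 1"
  by (simp add: ftilde_coeff_def)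

lemma ftilde_altdef: "ftilde \<nu> r = (\<Sum>j. ftilde_coeff \<nu> j * r ^ j)"
  by (simp add: ftilde_def ftilde_coeff_def)

lemma Fbig_altdef: "Fbig \<nu> r = (\<Sum>j. ftilde_coeff \<nu> j / real (Suc j) * r ^ Suc j)"
  by (simp add: Fbig_def ftilde_coeff_def divide_inverse mult_ac)

context
  fixes \<nu> :: real
  assumes \<nu>_pos: "0 < \<nu>" and \<nu>_le_1: "\<nu> \<le> 1"
begin

lemma ftilde_coeff_le_inverse_fact: "ftilde_coeff \<nu> j \<le> inverse (fact j)"
proof -
  have "fact j powr (-1/\<nu>) \<le> fact j powr (-1)"
    using \<nu>_pos \<nu>_le_1 by (intro powr_mono) (auto simp: field_simps)
  then show ?thesis by (simp add: ftilde_coeff_def powr_minus)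
qed

lemma summable_ftilde_coeff: "summable (\<lambda>j. ftilde_coeff \<nu> j * y ^ j)"
proof (rule summable_comparison_test')
  show "summable (\<lambda>j. inverse (fact j) * \<bar>y\<bar> ^ j)"
    using summable_exp[of "\<bar>y\<bar>"] by simp
  show "norm (ftilde_coeff \<nu> j * y ^ j) \<le> inverse (fact j) * \<bar>y\<bar> ^ j" for j
    using ftilde_coeff_le_inverse_fact[of j] ftilde_coeff_pos[of \<nu> j]
    by (simp add: abs_mult power_abs mult_right_mono)
qed

lemma ftilde_sums: "(\<lambda>j. ftilde_coeff \<nu> j * r ^ j) sums ftilde \<nu> r"
  unfolding ftilde_altdef using summable_ftilde_coeff by (rule summable_sums)

lemma ftilde_tail_sums: "(\<lambda>j. ftilde_coeff \<nu> (Suc j) * r ^ Suc j) sums (ftilde \<nu> r - 1)"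
  using sums_Suc_iff[of "\<lambda>j. ftilde_coeff \<nu> j * r ^ j"] ftilde_sums by simp

lemma ftilde_0 [simp]: "ftilde \<nu> 0 = 1"
  unfolding ftilde_altdef using powser_zero[of "ftilde_coeff \<nu>"] by simp

lemma ftilde_ge_1:
  assumes "0 \<le> r"
  shows "1 \<le> ftilde \<nu> r"
proof -
  have "(\<Sum>j<1. ftilde_coeff \<nu> j * r ^ j) \<le> ftilde \<nu> r"
    unfolding ftilde_altdef using assms ftilde_coeff_pos[of \<nu>]
    by (intro sum_le_suminf summable_ftilde_coeff) (auto intro!: mult_nonneg_nonneg simp: less_imp_le)
  then show ?thesis by simp
qed

lemma summable_Fbig_terms: "summable (\<lambda>j. ftilde_coeff \<nu> j / real (Suc j) * r ^ Suc j)"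
proof (rule summable_comparison_test')
  show "summable (\<lambda>j. \<bar>r\<bar> * (ftilde_coeff \<nu> j * \<bar>r\<bar> ^ j))"
    by (intro summable_mult summable_ftilde_coeff)
  show "norm (ftilde_coeff \<nu> j / real (Suc j) * r ^ Suc j) \<le> \<bar>r\<bar> * (ftilde_coeff \<nu> j * \<bar>r\<bar> ^ j)" for j
    using ftilde_coeff_pos[of \<nu> j]
    by (simp add: abs_mult power_abs divide_le_eq)
      (auto intro!: mult_left_mono simp: mult_le_cancel_left1 less_imp_le)
qed

lemma Fbig_pos: "0 < r \<Longrightarrow> 0 < Fbig \<nu> r"
  unfolding Fbig_altdef using ftilde_coeff_pos[of \<nu>]
  by (intro suminf_pos summable_Fbig_terms) simp

lemma ftilde_term_powr:
  assumes "0 < r"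
  shows "(ftilde_coeff \<nu> j * r ^ j) powr \<nu> = (r powr \<nu>) ^ j / fact j"
proof -
  have "(ftilde_coeff \<nu> j * r ^ j) powr \<nu> = ftilde_coeff \<nu> j powr \<nu> * (r ^ j) powr \<nu>"
    using assms ftilde_coeff_pos[of \<nu> j] by (simp add: powr_mult)
  also have "ftilde_coeff \<nu> j powr \<nu> = inverse (fact j)"
    unfolding ftilde_coeff_def powr_powr using \<nu>_pos by (simp add: powr_minus)
  also have "(r ^ j) powr \<nu> = (r powr \<nu>) ^ j"
    using assms by (simp add: powr_realpow[symmetric] powr_powr powr_power mult.commute)
  finally show ?thesis by (simp add: field_simps)
qed

lemma ftilde_term_Suc_powr:
  assumes "0 < r"
  shows "real (Suc j) * (ftilde_coeff \<nu> (Suc j) * r ^ Suc j) powr \<nu>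
    = r powr \<nu> * (ftilde_coeff \<nu> j * r ^ j) powr \<nu>"
  unfolding ftilde_term_powr[OF assms] fact_Suc by (simp del: of_nat_Suc add: field_simps)

lemma ftilde_term_Suc_le:
  assumes "0 < r"
  shows "real (Suc j) * (ftilde_coeff \<nu> (Suc j) * r ^ Suc j)
    \<le> r powr \<nu> * (\<nu> * (ftilde_coeff \<nu> j * r ^ j) + (1 - \<nu>) * (ftilde_coeff \<nu> (Suc j) * r ^ Suc j))"
proof -
  define A where "A = ftilde_coeff \<nu> j * r ^ j"
  define B where "B = ftilde_coeff \<nu> (Suc j) * r ^ Suc j"
  have "A > 0" "B > 0"
    using assms ftilde_coeff_pos[of \<nu>] by (simp_all add: A_def B_def del: power_Suc)
  have key: "real (Suc j) * B powr \<nu> = r powr \<nu> * A powr \<nu>"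
    unfolding A_def B_def by (rule ftilde_term_Suc_powr[OF assms])
  have "real (Suc j) * B = real (Suc j) * B powr \<nu> * B powr (1 - \<nu>)"
    using \<open>B > 0\<close> by (simp add: mult.assoc powr_add[symmetric])
  also have "\<dots> = r powr \<nu> * (A powr \<nu> * B powr (1 - \<nu>))"
    using key by (simp add: mult_ac)
  also have "\<dots> \<le> r powr \<nu> * (\<nu> * A + (1 - \<nu>) * B)"
    using Youngs_inequality_0[of \<nu> "1 - \<nu>" A B] \<nu>_pos \<nu>_le_1 \<open>A > 0\<close> \<open>B > 0\<close>
    by (intro mult_left_mono) auto
  finally show ?thesis by (simp add: A_def B_def)
qed

lemma ftilde_term_le:
  assumes "0 < r"
  shows "r powr \<nu> * (ftilde_coeff \<nu> j * r ^ j)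
    \<le> \<nu> * (real (Suc (Suc j)) * ftilde_coeff \<nu> (Suc j) * r ^ Suc j)
      + (1 - \<nu>) * (real (Suc j) * ftilde_coeff \<nu> j * r ^ j)"
proof -
  define A where "A = ftilde_coeff \<nu> j * r ^ j"
  define B where "B = ftilde_coeff \<nu> (Suc j) * r ^ Suc j"
  have "A > 0" "B > 0"
    using assms ftilde_coeff_pos[of \<nu>] by (simp_all add: A_def B_def del: power_Suc)
  have key: "real (Suc j) * B powr \<nu> = r powr \<nu> * A powr \<nu>"
    unfolding A_def B_def by (rule ftilde_term_Suc_powr[OF assms])
  have "r powr \<nu> * A = r powr \<nu> * A powr \<nu> * A powr (1 - \<nu>)"
    using \<open>A > 0\<close> by (simp add: mult.assoc powr_add[symmetric])
  also have "\<dots> = real (Suc j) * (B powr \<nu> * A powr (1 - \<nu>))"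
    using key by (simp add: mult_ac)
  also have "\<dots> \<le> real (Suc j) * (\<nu> * B + (1 - \<nu>) * A)"
    using Youngs_inequality_0[of \<nu> "1 - \<nu>" B A] \<nu>_pos \<nu>_le_1 \<open>A > 0\<close> \<open>B > 0\<close>
    by (intro mult_left_mono) auto
  also have "\<dots> \<le> \<nu> * (real (Suc (Suc j)) * B) + (1 - \<nu>) * (real (Suc j) * A)"
    using \<nu>_pos \<open>B > 0\<close> by (simp add: algebra_simps)
  finally show ?thesis by (simp add: A_def B_def mult.assoc)
qed

lemma ftilde_term_integral_le:
  assumes "0 < r"
  shows "ftilde_coeff \<nu> j / real (Suc j) * r ^ Suc j
    \<le> r powr (1 - \<nu>) * (\<nu> * (ftilde_coeff \<nu> (Suc j) * r ^ Suc j) + (1 - \<nu>) * (ftilde_coeff \<nu> j * r ^ j))"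
proof -
  define A where "A = ftilde_coeff \<nu> j * r ^ j"
  define B where "B = ftilde_coeff \<nu> (Suc j) * r ^ Suc j"
  have "A > 0" "B > 0"
    using assms ftilde_coeff_pos[of \<nu>] by (simp_all add: A_def B_def del: power_Suc)
  have key: "real (Suc j) * B powr \<nu> = r powr \<nu> * A powr \<nu>"
    unfolding A_def B_def by (rule ftilde_term_Suc_powr[OF assms])
  have "ftilde_coeff \<nu> j / real (Suc j) * r ^ Suc j
      = r powr (1 - \<nu>) * (r powr \<nu> * A powr \<nu> / real (Suc j)) * A powr (1 - \<nu>)"
    using assms \<open>A > 0\<close> by (simp add: A_def powr_add[symmetric] field_simps)
  also have "r powr \<nu> * A powr \<nu> / real (Suc j) = B powr \<nu>"
    by (simp add: key[symmetric] del: of_nat_Suc)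
  also have "r powr (1 - \<nu>) * B powr \<nu> * A powr (1 - \<nu>) = r powr (1 - \<nu>) * (B powr \<nu> * A powr (1 - \<nu>))"
    by (simp only: mult.assoc)
  also have "\<dots> \<le> r powr (1 - \<nu>) * (\<nu> * B + (1 - \<nu>) * A)"
    using Youngs_inequality_0[of \<nu> "1 - \<nu>" B A] \<nu>_pos \<nu>_le_1 \<open>A > 0\<close> \<open>B > 0\<close>
    by (intro mult_left_mono) auto
  finally show ?thesis by (simp add: A_def B_def)
qed

lemma index_weighted_sum_le_powr_ftilde:
  assumes "0 \<le> r"
  shows "(\<Sum>j. real (j+1) * fact (j+1) powr (-1/\<nu>) * r ^ (j+1)) \<le> r powr \<nu> * ftilde \<nu> r"
proof (cases "r = 0")
  case False
  with assms have "0 < r" by simp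
  have "summable (\<lambda>j. r * (diffs (ftilde_coeff \<nu>) j * r ^ j))"
    by (intro summable_mult termdiff_converges_all summable_ftilde_coeff)
  then have "summable (\<lambda>j. real (Suc j) * (ftilde_coeff \<nu> (Suc j) * r ^ Suc j))"
    by (simp add: diffs_def mult_ac)
  moreover have "(\<lambda>j. r powr \<nu>
      * (\<nu> * (ftilde_coeff \<nu> j * r ^ j) + (1 - \<nu>) * (ftilde_coeff \<nu> (Suc j) * r ^ Suc j)))
      sums (r powr \<nu> * (\<nu> * ftilde \<nu> r + (1 - \<nu>) * (ftilde \<nu> r - 1)))"
    by (intro sums_mult sums_add ftilde_sums ftilde_tail_sums)
  ultimately have "(\<Sum>j. real (Suc j) * (ftilde_coeff \<nu> (Suc j) * r ^ Suc j))
      \<le> r powr \<nu> * (\<nu> * ftilde \<nu> r + (1 - \<nu>) * (ftilde \<nu> r - 1))"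
    by (intro sums_le[OF ftilde_term_Suc_le[OF \<open>0 < r\<close>] summable_sums])
  also have "\<dots> \<le> r powr \<nu> * ftilde \<nu> r"
    using \<nu>_le_1 by (intro mult_left_mono) (auto simp: algebra_simps)
  finally show ?thesis by (simp add: ftilde_coeff_def mult.assoc)
qed simp

lemma powr_ftilde_le_index_weighted_sum:
  assumes "0 \<le> r"
  shows "r powr \<nu> * ftilde \<nu> r \<le> (\<Sum>j. real (j+1) * fact j powr (-1/\<nu>) * r ^ j)"
proof -
  define D where "D = (\<Sum>j. real (Suc j) * ftilde_coeff \<nu> j * r ^ j)"
  have D_sums: "(\<lambda>j. real (Suc j) * ftilde_coeff \<nu> j * r ^ j) sums D"
    unfolding D_def by (intro summable_sums summable_Suc_mult_powser summable_ftilde_coeff)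
  have "r powr \<nu> * ftilde \<nu> r \<le> D"
  proof (cases "r = 0")
    case True
    show ?thesis
      using D_sums ftilde_coeff_pos[of \<nu>] True
      by (auto simp: sums_iff intro!: suminf_nonneg mult_nonneg_nonneg less_imp_le)
  next
    case False
    with assms have "0 < r" by simp
    have "(\<lambda>j. real (Suc (Suc j)) * ftilde_coeff \<nu> (Suc j) * r ^ Suc j) sums (D - 1)"
      using D_sums sums_Suc_iff[of "\<lambda>j. real (Suc j) * ftilde_coeff \<nu> j * r ^ j"] by simp
    then have "(\<lambda>j. \<nu> * (real (Suc (Suc j)) * ftilde_coeff \<nu> (Suc j) * r ^ Suc j)
        + (1 - \<nu>) * (real (Suc j) * ftilde_coeff \<nu> j * r ^ j)) sums (\<nu> * (D - 1) + (1 - \<nu>) * D)"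
      by (intro sums_add sums_mult D_sums)
    with sums_mult[OF ftilde_sums] have "r powr \<nu> * ftilde \<nu> r \<le> \<nu> * (D - 1) + (1 - \<nu>) * D"
      by (rule sums_le[OF ftilde_term_le[OF \<open>0 < r\<close>]])
    also have "\<dots> \<le> D"
      using \<nu>_pos by (simp add: algebra_simps)
    finally show ?thesis .
  qed
  then show ?thesis by (simp add: D_def ftilde_coeff_def)
qed

lemma Fbig_le_powr_ftilde:
  assumes "0 \<le> r"
  shows "Fbig \<nu> r \<le> r powr (1 - \<nu>) * ftilde \<nu> r"
proof (cases "r = 0")
  case False
  with assms have "0 < r" by simp
  have "(\<lambda>j. r powr (1 - \<nu>)
      * (\<nu> * (ftilde_coeff \<nu> (Suc j) * r ^ Suc j) + (1 - \<nu>) * (ftilde_coeff \<nu> j * r ^ j)))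
      sums (r powr (1 - \<nu>) * (\<nu> * (ftilde \<nu> r - 1) + (1 - \<nu>) * ftilde \<nu> r))"
    by (intro sums_mult sums_add ftilde_sums ftilde_tail_sums)
  with summable_sums[OF summable_Fbig_terms]
  have "Fbig \<nu> r \<le> r powr (1 - \<nu>) * (\<nu> * (ftilde \<nu> r - 1) + (1 - \<nu>) * ftilde \<nu> r)"
    unfolding Fbig_altdef by (rule sums_le[OF ftilde_term_integral_le[OF \<open>0 < r\<close>]])
  also have "\<dots> \<le> r powr (1 - \<nu>) * ftilde \<nu> r"
    using \<nu>_pos by (intro mult_left_mono) (auto simp: algebra_simps)
  finally show ?thesis .
qed (simp add: Fbig_altdef)

lemma ftilde_has_real_derivative:
  "(ftilde \<nu> has_real_derivative (\<Sum>j. diffs (ftilde_coeff \<nu>) j * r ^ j)) (at r)"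
  unfolding ftilde_altdef[abs_def]
  by (rule termdiffs_strong_converges_everywhere[OF summable_ftilde_coeff])

lemma deriv_ftilde: "deriv (ftilde \<nu>) r = (\<Sum>j. diffs (ftilde_coeff \<nu>) j * r ^ j)"
  by (rule DERIV_imp_deriv[OF ftilde_has_real_derivative])

lemma Fbig_has_real_derivative: "(Fbig \<nu> has_real_derivative ftilde \<nu> r) (at r)"
  unfolding Fbig_altdef[abs_def] ftilde_altdef
  by (rule powser_integral_has_real_derivative[OF summable_ftilde_coeff])

lemma deriv_times_ftilde:
  "deriv (\<lambda>r. r * ftilde \<nu> r) r = (\<Sum>j. real (j+1) * fact j powr (-1/\<nu>) * r ^ j)"
  using DERIV_imp_deriv[OF times_powser_has_real_derivative[OF summable_ftilde_coeff]]
  by (simp add: ftilde_altdef ftilde_coeff_def)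

lemma continuous_on_ftilde: "continuous_on S (ftilde \<nu>)"
  using ftilde_has_real_derivative by (intro continuous_at_imp_continuous_on ballI DERIV_isCont) blast

lemma continuous_on_Fbig: "continuous_on S (Fbig \<nu>)"
  using Fbig_has_real_derivative by (intro continuous_at_imp_continuous_on ballI DERIV_isCont) blast

lemma deriv_ftilde_le:
  assumes "0 < r"
  shows "deriv (ftilde \<nu>) r \<le> r powr (\<nu> - 1) * ftilde \<nu> r"
proof -
  have "r * deriv (ftilde \<nu>) r = (\<Sum>j. real (j+1) * fact (j+1) powr (-1/\<nu>) * r ^ (j+1))"
    unfolding deriv_ftilde using termdiff_converges_all[OF summable_ftilde_coeff]
    by (subst suminf_mult[symmetric]) (auto simp: diffs_def ftilde_coeff_def mult_ac)
  also have "\<dots> \<le> r powr \<nu> * ftilde \<nu> r"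
    using assms by (intro index_weighted_sum_le_powr_ftilde) simp
  also have "\<dots> = r * (r powr (\<nu> - 1) * ftilde \<nu> r)"
    using assms by (simp add: powr_diff field_simps)
  finally show ?thesis using assms by simp
qed

lemma powr_Fbig_le_ftilde:
  assumes "0 < r"
  shows "r powr (\<nu> - 1) * Fbig \<nu> r \<le> ftilde \<nu> r"
proof -
  have "r powr (\<nu> - 1) * Fbig \<nu> r \<le> r powr (\<nu> - 1) * (r powr (1 - \<nu>) * ftilde \<nu> r)"
    using Fbig_le_powr_ftilde assms by (intro mult_left_mono) auto
  also have "\<dots> = ftilde \<nu> r"
    using assms by (simp add: powr_add[symmetric] mult.assoc[symmetric])
  finally show ?thesis .
qed

lemma powr_weight_has_real_derivative:
  "0 < y \<Longrightarrow> ((\<lambda>y. y powr \<nu> / \<nu>) has_real_derivative y powr (\<nu> - 1)) (at y)"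
  using DERIV_cdivide[OF has_real_derivative_powr, of y \<nu> \<nu>] \<nu>_pos by simp

lemma continuous_on_powr_weight: "S \<subseteq> {0..} \<Longrightarrow> continuous_on S (\<lambda>y. y powr \<nu> / \<nu>)"
  using \<nu>_pos by (intro continuous_on_divide continuous_on_powr' continuous_intros) auto

lemma ftilde_exp_weighted_decreasing:
  assumes "0 \<le> s" "s \<le> t"
  shows "ftilde \<nu> t / exp (t powr \<nu> / \<nu>) \<le> ftilde \<nu> s / exp (s powr \<nu> / \<nu>)"
proof (rule DERIV_le_imp_exp_weighted_decreasing[OF \<open>s \<le> t\<close> continuous_on_ftilde continuous_on_powr_weight])
  show "{s..t} \<subseteq> {0..}" using assms by auto
  fix y assume "s < y" "y < t"
  with assms have "0 < y" by simp
  show "(ftilde \<nu> has_real_derivative deriv (ftilde \<nu>) y) (at y)"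
    using ftilde_has_real_derivative by (simp add: deriv_ftilde)
  show "((\<lambda>y. y powr \<nu> / \<nu>) has_real_derivative y powr (\<nu> - 1)) (at y)"
    using \<open>0 < y\<close> by (rule powr_weight_has_real_derivative)
  show "deriv (ftilde \<nu>) y \<le> y powr (\<nu> - 1) * ftilde \<nu> y"
    using \<open>0 < y\<close> by (rule deriv_ftilde_le)
qed

lemma Fbig_exp_weighted_increasing:
  assumes "0 \<le> s" "s \<le> t"
  shows "Fbig \<nu> s / exp (s powr \<nu> / \<nu>) \<le> Fbig \<nu> t / exp (t powr \<nu> / \<nu>)"
proof (rule DERIV_ge_imp_exp_weighted_increasing[OF \<open>s \<le> t\<close> continuous_on_Fbig continuous_on_powr_weight])
  show "{s..t} \<subseteq> {0..}" using assms by auto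
  fix y assume "s < y" "y < t"
  with assms have "0 < y" by simp
  show "(Fbig \<nu> has_real_derivative ftilde \<nu> y) (at y)"
    by (rule Fbig_has_real_derivative)
  show "((\<lambda>y. y powr \<nu> / \<nu>) has_real_derivative y powr (\<nu> - 1)) (at y)"
    using \<open>0 < y\<close> by (rule powr_weight_has_real_derivative)
  show "y powr (\<nu> - 1) * Fbig \<nu> y \<le> ftilde \<nu> y"
    using \<open>0 < y\<close> by (rule powr_Fbig_le_ftilde)
qed

lemma ftilde_le_exp:
  assumes "0 \<le> r"
  shows "ftilde \<nu> r \<le> exp (r powr \<nu> / \<nu>)"
  using ftilde_exp_weighted_decreasing[OF order_refl assms] by simp

lemma Fbig_exp_le_ftilde:
  assumes "0 \<le> r" "0 < a"
  shows "Fbig \<nu> a * max r a powr (\<nu> - 1) * exp ((r powr \<nu> - a powr \<nu>) / \<nu>) \<le> ftilde \<nu> r"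
proof -
  have exp_eq: "exp ((r powr \<nu> - a powr \<nu>) / \<nu>) = exp (r powr \<nu> / \<nu>) / exp (a powr \<nu> / \<nu>)"
    by (simp add: diff_divide_distrib exp_diff)
  show ?thesis
  proof (cases "a \<le> r")
    case True
    have "Fbig \<nu> a * exp ((r powr \<nu> - a powr \<nu>) / \<nu>) \<le> Fbig \<nu> r"
      using Fbig_exp_weighted_increasing[OF _ True] assms by (simp add: exp_eq field_simps)
    then have "r powr (\<nu> - 1) * (Fbig \<nu> a * exp ((r powr \<nu> - a powr \<nu>) / \<nu>)) \<le> r powr (\<nu> - 1) * Fbig \<nu> r"
      by (rule mult_left_mono) simp
    also have "\<dots> \<le> ftilde \<nu> r"
      using True assms by (intro powr_Fbig_le_ftilde) simp
    finally show ?thesis using True by (simp add: max_def mult_ac)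
  next
    case False
    have "a powr (\<nu> - 1) * Fbig \<nu> a * exp ((r powr \<nu> - a powr \<nu>) / \<nu>)
        \<le> ftilde \<nu> a * exp ((r powr \<nu> - a powr \<nu>) / \<nu>)"
      using powr_Fbig_le_ftilde[OF \<open>0 < a\<close>] by (rule mult_right_mono) simp
    also have "\<dots> \<le> ftilde \<nu> r"
      using ftilde_exp_weighted_decreasing[OF \<open>0 \<le> r\<close>, of a] False by (simp add: exp_eq field_simps)
    finally show ?thesis using False by (simp add: max_def mult_ac)
  qed
qed

section \<open>Asymptotics of ftilde\<close>

lemma ftilde_eq_poisson_ratio_powsum:
  assumes "1 \<le> r"
  shows "ftilde \<nu> r = (exp (r powr \<nu>) / poisson_ratio_powsum 1 (r powr \<nu>)) powr (1/\<nu>)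
    * poisson_ratio_powsum (1/\<nu>) (r powr \<nu>)"
proof -
  define x where "x = r powr \<nu>"
  define M where "M = x ^ poisson_mode x / fact (poisson_mode x)"
  have "1 \<le> x"
    using assms \<nu>_pos by (simp add: x_def ge_one_powr_ge_zero)
  then have "0 < M"
    by (simp add: M_def)
  have exp_eq: "exp x / poisson_ratio_powsum 1 x = M"
    using \<open>0 < M\<close> \<open>1 \<le> x\<close> by (simp add: poisson_ratio_powsum_1 M_def)
  have term_eq: "ftilde_coeff \<nu> j * r ^ j = M powr (1/\<nu>) * poisson_ratio x j powr (1/\<nu>)" for j
  proof -
    have "ftilde_coeff \<nu> j * r ^ j = ((ftilde_coeff \<nu> j * r ^ j) powr \<nu>) powr (1/\<nu>)"
      using assms \<nu>_pos ftilde_coeff_pos[of \<nu> j] by (simp add: powr_powr)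
    also have "(ftilde_coeff \<nu> j * r ^ j) powr \<nu> = M * poisson_ratio x j"
      using ftilde_term_powr[of r j] assms \<open>0 < M\<close>
      by (simp add: poisson_ratio_def M_def x_def)
    finally show ?thesis
      using \<open>0 < M\<close> poisson_ratio_pos[of x j] \<open>1 \<le> x\<close> by (simp add: powr_mult)
  qed
  have "ftilde \<nu> r = (\<Sum>j. M powr (1/\<nu>) * poisson_ratio x j powr (1/\<nu>))"
    unfolding ftilde_altdef term_eq ..
  also have "\<dots> = M powr (1/\<nu>) * poisson_ratio_powsum (1/\<nu>) x"
    unfolding poisson_ratio_powsum_def
    using summable_poisson_ratio_powr[OF \<open>1 \<le> x\<close>] \<nu>_pos \<nu>_le_1 by (intro suminf_mult) simp
  finally show ?thesis
    unfolding x_def[symmetric] exp_eq .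
qed

lemma ftilde_div_eq_poisson_ratio_powsum:
  assumes "1 \<le> r"
  defines "x \<equiv> r powr \<nu>"
  shows "ftilde \<nu> r / (r powr ((\<nu> - 1) / 2) * exp (r powr \<nu> / \<nu>))
    = (poisson_ratio_powsum (1/\<nu>) x / sqrt x) / (poisson_ratio_powsum 1 x / sqrt x) powr (1/\<nu>)"
proof -
  define S1 where "S1 = poisson_ratio_powsum 1 x"
  define Sp where "Sp = poisson_ratio_powsum (1/\<nu>) x"
  have "1 \<le> x"
    using assms \<nu>_pos by (simp add: x_def ge_one_powr_ge_zero)
  have "0 < S1"
    using \<open>1 \<le> x\<close> by (simp add: S1_def poisson_ratio_powsum_1)
  have sqrt_x: "sqrt x = r powr (\<nu> / 2)"
    using assms by (simp add: x_def powr_half_sqrt[symmetric] powr_powr)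
  have sqrt_x_powr: "sqrt x powr (1/\<nu>) = r powr (1/2)"
    unfolding sqrt_x using \<nu>_pos by (simp add: powr_powr)
  have "r powr ((\<nu> - 1) / 2) = sqrt x / sqrt x powr (1/\<nu>)"
    unfolding sqrt_x_powr unfolding sqrt_x by (simp add: powr_diff[symmetric] diff_divide_distrib)
  moreover have "exp (r powr \<nu> / \<nu>) = exp x powr (1/\<nu>)"
    by (simp add: x_def exp_powr_real)
  moreover have "ftilde \<nu> r = exp x powr (1/\<nu>) / S1 powr (1/\<nu>) * Sp"
    using ftilde_eq_poisson_ratio_powsum[OF assms(1)] \<open>0 < S1\<close>
    by (simp add: x_def S1_def Sp_def powr_divide)
  moreover have "(S1 / sqrt x) powr (1/\<nu>) = S1 powr (1/\<nu>) / sqrt x powr (1/\<nu>)"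
    using \<open>0 < S1\<close> \<open>1 \<le> x\<close> by (simp add: powr_divide)
  moreover have "(e / A * Sp) / ((s / sp) * e) = (Sp / s) / (A / sp)"
    if "0 < e" "0 < A" "0 < s" "0 < sp" for e A s sp :: real
    using that by (simp add: field_simps)
  ultimately show ?thesis
    using \<open>0 < S1\<close> \<open>1 \<le> x\<close> by (simp add: S1_def Sp_def)
qed

lemma gaussian_constant_ratio:
  "sqrt (2 * pi / (1/\<nu>)) / sqrt (2 * pi / 1) powr (1/\<nu>) = (2*pi) powr ((\<nu>-1)/(2*\<nu>)) * sqrt \<nu>"
proof -
  have "sqrt (2 * pi / (1/\<nu>)) = (2*pi) powr (1/2) * sqrt \<nu>"
    using \<nu>_pos by (simp add: powr_half_sqrt real_sqrt_mult)
  moreover have "sqrt (2 * pi / 1) powr (1/\<nu>) = (2*pi) powr (1/(2*\<nu>))"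
    by (simp add: powr_half_sqrt[symmetric] powr_powr)
  moreover have "(\<nu>-1)/(2*\<nu>) = 1/2 - 1/(2*\<nu>)"
    using \<nu>_pos by (simp add: field_simps)
  ultimately show ?thesis
    by (simp add: powr_diff)
qed

lemma ftilde_asymp_equiv:
  "ftilde \<nu> \<sim>[at_top] (\<lambda>r. (2*pi) powr ((\<nu>-1)/(2*\<nu>)) * sqrt \<nu> * r powr ((\<nu>-1)/2) * exp (r powr \<nu> / \<nu>))"
proof (rule asymp_equivI')
  define K where "K = (2*pi) powr ((\<nu>-1)/(2*\<nu>)) * sqrt \<nu>"
  have "0 < K"
    using \<nu>_pos by (simp add: K_def)
  have "((\<lambda>x. (poisson_ratio_powsum (1/\<nu>) x / sqrt x) / (poisson_ratio_powsum 1 x / sqrt x) powr (1/\<nu>))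
      \<longlongrightarrow> K) at_top"
    unfolding K_def gaussian_constant_ratio[symmetric] using \<nu>_pos \<nu>_le_1
    by (intro tendsto_intros tendsto_powr poisson_ratio_powsum_tendsto) auto
  then have "((\<lambda>r. (poisson_ratio_powsum (1/\<nu>) (r powr \<nu>) / sqrt (r powr \<nu>))
      / (poisson_ratio_powsum 1 (r powr \<nu>) / sqrt (r powr \<nu>)) powr (1/\<nu>)) \<longlongrightarrow> K) at_top"
    by (rule filterlim_compose[OF _ real_powr_at_top[OF \<nu>_pos]])
  moreover have "\<forall>\<^sub>F r in at_top. (poisson_ratio_powsum (1/\<nu>) (r powr \<nu>) / sqrt (r powr \<nu>))
      / (poisson_ratio_powsum 1 (r powr \<nu>) / sqrt (r powr \<nu>)) powr (1/\<nu>)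
      = ftilde \<nu> r / (r powr ((\<nu> - 1) / 2) * exp (r powr \<nu> / \<nu>))"
    using eventually_ge_at_top[of 1] by eventually_elim (simp add: ftilde_div_eq_poisson_ratio_powsum)
  ultimately have "((\<lambda>r. ftilde \<nu> r / (r powr ((\<nu> - 1) / 2) * exp (r powr \<nu> / \<nu>))) \<longlongrightarrow> K) at_top"
    by (rule Lim_transform_eventually)
  then have "((\<lambda>r. ftilde \<nu> r / (r powr ((\<nu> - 1) / 2) * exp (r powr \<nu> / \<nu>)) / K) \<longlongrightarrow> K / K) at_top"
    by (rule tendsto_divide[OF _ tendsto_const]) (use \<open>0 < K\<close> in simp)
  then show "((\<lambda>r. ftilde \<nu> r / ((2*pi) powr ((\<nu>-1)/(2*\<nu>)) * sqrt \<nu> * r powr ((\<nu>-1)/2) * exp (r powr \<nu> / \<nu>)))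
      \<longlongrightarrow> 1) at_top"
    using \<open>0 < K\<close> \<nu>_pos by (simp add: K_def divide_divide_eq_left mult_ac)
qed

end

theorem lemmaA1:
  fixes \<nu> :: real and \<xi> :: "'a::euclidean_space"
  assumes "0 < \<nu>" and "\<nu> \<le> 1"
  shows
    "(\<Sum>j. real (j+1) * fact (j+1) powr (-1/\<nu>) * norm \<xi> ^ (j+1))
        \<le> norm \<xi> powr \<nu> * (\<Sum>j. fact j powr (-1/\<nu>) * norm \<xi> ^ j)
     \<and> norm \<xi> powr \<nu> * (\<Sum>j. fact j powr (-1/\<nu>) * norm \<xi> ^ j)
        \<le> (\<Sum>j. real (j+1) * fact j powr (-1/\<nu>) * norm \<xi> ^ j)
     \<and> (\<Sum>j. inverse (real (j+1)) * fact j powr (-1/\<nu>) * norm \<xi> ^ (j+1))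
        \<le> norm \<xi> powr (1-\<nu>) * (\<Sum>j. fact j powr (-1/\<nu>) * norm \<xi> ^ j)
     \<and> (\<xi> \<noteq> 0 \<longrightarrow>
          deriv (ftilde \<nu>) (norm \<xi>) / ftilde \<nu> (norm \<xi>) \<le> norm \<xi> powr (\<nu>-1)
        \<and> norm \<xi> powr (\<nu>-1) \<le> ftilde \<nu> (norm \<xi>) / Fbig \<nu> (norm \<xi>)
        \<and> deriv (Fbig \<nu>) (norm \<xi>) = ftilde \<nu> (norm \<xi>))
     \<and> norm \<xi> powr \<nu> * ftilde \<nu> (norm \<xi>) \<le> deriv (\<lambda>r. r * ftilde \<nu> r) (norm \<xi>)
     \<and> (\<forall>a>0. Fbig \<nu> a * max (norm \<xi>) a powr (\<nu>-1) * exp ((norm \<xi> powr \<nu> - a powr \<nu>) / \<nu>)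
               \<le> ftilde \<nu> (norm \<xi>))
     \<and> ftilde \<nu> (norm \<xi>) \<le> exp (norm \<xi> powr \<nu> / \<nu>)
     \<and> (\<lambda>x::'a. ftilde \<nu> (norm x)) \<sim>[at_infinity]
         (\<lambda>x. (2*pi) powr ((\<nu>-1)/(2*\<nu>)) * sqrt \<nu> * norm x powr ((\<nu>-1)/2)
               * exp (norm x powr \<nu> / \<nu>))"
proof -
  have r: "0 \<le> norm \<xi>" by simp
  have "\<xi> \<noteq> 0 \<Longrightarrow> deriv (ftilde \<nu>) (norm \<xi>) / ftilde \<nu> (norm \<xi>) \<le> norm \<xi> powr (\<nu>-1)"
    using deriv_ftilde_le[OF assms] ftilde_ge_1[OF assms r] by (simp add: pos_divide_le_eq mult.commute)
  moreover have "\<xi> \<noteq> 0 \<Longrightarrow> norm \<xi> powr (\<nu>-1) \<le> ftilde \<nu> (norm \<xi>) / Fbig \<nu> (norm \<xi>)"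
    using powr_Fbig_le_ftilde[OF assms] Fbig_pos[OF assms] by (simp add: pos_le_divide_eq)
  ultimately show ?thesis
    unfolding ftilde_def[symmetric] Fbig_def[symmetric]
    using index_weighted_sum_le_powr_ftilde[OF assms r] powr_ftilde_le_index_weighted_sum[OF assms r]
      Fbig_le_powr_ftilde[OF assms r] DERIV_imp_deriv[OF Fbig_has_real_derivative[OF assms]]
      deriv_times_ftilde[OF assms] Fbig_exp_le_ftilde[OF assms r] ftilde_le_exp[OF assms r]
      asymp_equiv_compose'[OF ftilde_asymp_equiv[OF assms] filterlim_norm_at_top]
    by simp
qed

end
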